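(* Let $\mu$ be a positive finite Borel measure on $[0,1)$ which is a Carleson measure but not a vanishing Carleson measure, and let $\gamma>0$. Then $I_\mu: H^\infty_{v_\gamma}\to H^\infty_{v_\gamma}$ is (well defined and) continuous if and only if $0<\gamma<1$. In this case, $I_\mu: H^\infty_{v_\gamma}\to H^\infty_{v_\gamma}$ is never compact.
   Context: $\mathbb{D}$ is the open unit disc, $H(\mathbb{D})$ the holomorphic functions on $\mathbb{D}$. For a positive finite Borel measure $\mu$ on $[0,1)$, $I_\mu(f)(z)=\int_0^1\frac{f(t)}{1-tz}\,d\mu(t)$ for $f\in H(\mathbb{D})$ whenever this defines a holomorphic function on $\mathbb{D}$. $v_\gamma(z)=(1-|z|)^\gamma$ and $H^\infty_{v_\gamma}=\{f\in H(\mathbb{D}):\sup_{z\in\mathbb{D}}(1-|z|)^\gamma|f(z)|<\infty\}$ with this supremum as norm. $\mu$ is a Carleson measure if $\mu([t,1))=O(1-t)$ as $t\to1^-$, and a vanishing Carleson measure if $\mu([t,1))=o(1-t)$ as $t\to1^-$. *)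

theory Defs
  imports "HOL-Analysis.Analysis" "HOL-Library.Landau_Symbols"
begin

definition Hv :: "real \<Rightarrow> (complex \<Rightarrow> complex) set" where
  "Hv \<gamma> = {f. f holomorphic_on ball 0 1 \<and>
      bdd_above ((\<lambda>z. (1 - norm z) powr \<gamma> * norm (f z)) ` ball 0 1)}"

definition normv :: "real \<Rightarrow> (complex \<Rightarrow> complex) \<Rightarrow> real" where
  "normv \<gamma> f = (SUP z\<in>ball 0 1. (1 - norm z) powr \<gamma> * norm (f z))"

definition Imu :: "real measure \<Rightarrow> (complex \<Rightarrow> complex) \<Rightarrow> complex \<Rightarrow> complex" where
  "Imu \<mu> f z = (\<integral>t. f (complex_of_real t) / (1 - complex_of_real t * z) \<partial>\<mu>)"

definition Imu_well_defined :: "real measure \<Rightarrow> real \<Rightarrow> bool" where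
  "Imu_well_defined \<mu> \<gamma> \<longleftrightarrow>
     (\<forall>f\<in>Hv \<gamma>. (\<forall>z\<in>ball 0 1. integrable \<mu> (\<lambda>t. f (complex_of_real t) / (1 - complex_of_real t * z)))
        \<and> Imu \<mu> f holomorphic_on ball 0 1 \<and> Imu \<mu> f \<in> Hv \<gamma>)"

definition Imu_continuous :: "real measure \<Rightarrow> real \<Rightarrow> bool" where
  "Imu_continuous \<mu> \<gamma> \<longleftrightarrow> Imu_well_defined \<mu> \<gamma> \<and>
     (\<forall>f\<in>Hv \<gamma>. \<forall>\<epsilon>>0. \<exists>\<delta>>0. \<forall>g\<in>Hv \<gamma>.
        normv \<gamma> (\<lambda>z. g z - f z) < \<delta> \<longrightarrow> normv \<gamma> (\<lambda>z. Imu \<mu> g z - Imu \<mu> f z) < \<epsilon>)"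

definition Imu_compact :: "real measure \<Rightarrow> real \<Rightarrow> bool" where
  "Imu_compact \<mu> \<gamma> \<longleftrightarrow> Imu_well_defined \<mu> \<gamma> \<and>
     (\<forall>F :: nat \<Rightarrow> complex \<Rightarrow> complex.
        (\<forall>n. F n \<in> Hv \<gamma>) \<and> (\<exists>B. \<forall>n. normv \<gamma> (F n) \<le> B) \<longrightarrow>
        (\<exists>r g. strict_mono r \<and> g \<in> Hv \<gamma> \<and>
           (\<lambda>n. normv \<gamma> (\<lambda>z. Imu \<mu> (F (r n)) z - g z)) \<longlonglongrightarrow> 0))"

definition carleson :: "real measure \<Rightarrow> bool" where
  "carleson \<mu> \<longleftrightarrow> (\<lambda>t. measure \<mu> {t..<1}) \<in> O[at_left 1](\<lambda>t. 1 - t)"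

definition vanishing_carleson :: "real measure \<Rightarrow> bool" where
  "vanishing_carleson \<mu> \<longleftrightarrow> (\<lambda>t. measure \<mu> {t..<1}) \<in> o[at_left 1](\<lambda>t. 1 - t)"

end

theory Submission
  imports Defs "HOL-Complex_Analysis.Cauchy_Integral_Formula"
begin

(* Boundedness for 0 < gamma < 1: every f in H^infinity_{v_gamma} satisfies
   |f(t)| <= ||f|| (1 - t)^(-gamma), so it suffices to bound the integral of
   (1 - t)^(-gamma) / (1 - t r) against mu by K (1 - r)^(-gamma).  Cutting [0,1) into the
   dyadic shells where 1 - t is comparable to 2^k (1 - r), k in Z, and applying the Carleson
   bound mu[s,1) <= C (1 - s) on each shell leaves two convergent geometric series, with ratios
   2^(gamma - 1) for the shells near 1 and 2^(-gamma) for the others.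

   Failure for gamma >= 1: 1/(1 - z) lies in H^infinity_{v_gamma}, and integrability of
   1/(1 - t) against mu already forces mu[s,1) = o(1 - s).

   Non-compactness: the kernels f_b(z) = (1 - b)^(1 - gamma) / (1 - b z) have norm at most 1,
   and I_mu f_b tends to 0 pointwise as b -> 1, so a norm limit of any subsequence of the
   I_mu f_b would be 0; but (1 - b)^gamma |I_mu f_b(b)| >= mu[b,1) / (4 (1 - b)), which stays
   bounded below along a sequence b_n -> 1 when mu is not a vanishing Carleson measure. *)

lemma one_minus_mult_pos:
  fixes t s :: real
  assumes "0 \<le> t" "t < 1" "0 \<le> s" "s < 1"
  shows "0 < 1 - t * s"
  using mult_strict_mono[OF assms(2,4) _ assms(3)] by simp

lemma norm_one_minus_mult_ge:
  fixes t :: real and z :: complex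
  assumes "0 \<le> t"
  shows "1 - t * norm z \<le> norm (1 - of_real t * z)"
  using norm_triangle_ineq2[of 1 "of_real t * z"] assms by (simp add: norm_mult)

lemma powr_interpolate_le:
  fixes a b m \<beta> :: real
  assumes "0 < a" "a \<le> m" "0 < b" "b \<le> m" "0 \<le> \<beta>" "\<beta> \<le> 1"
  shows "a powr \<beta> * b powr (1 - \<beta>) \<le> m"
proof -
  have "a powr \<beta> * b powr (1 - \<beta>) \<le> m powr \<beta> * m powr (1 - \<beta>)"
    using assms by (intro mult_mono powr_mono2) auto
  also have "\<dots> = m" using assms by (simp add: powr_add[symmetric])
  finally show ?thesis .
qed

lemma kernel_le_near_far:
  fixes t r \<gamma> :: real
  assumes t: "0 \<le> t" "t < 1" and r: "0 \<le> r" "r < 1"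
  shows "(1 - t) powr (-\<gamma>) / (1 - t * r)
    \<le> (1 - t) powr (-\<gamma>) / (1 - r) * indicator {r..} t + (1 - t) powr (-\<gamma> - 1) * indicator {..<r} t"
proof (cases "r \<le> t")
  case True
  then have "(1 - t) powr (-\<gamma>) / (1 - t * r) \<le> (1 - t) powr (-\<gamma>) / (1 - r)"
    using t r one_minus_mult_pos[of t r] by (intro divide_left_mono) (auto simp: mult_left_le_one_le)
  then show ?thesis
    using True by simp
next
  case False
  then have "(1 - t) powr (-\<gamma>) / (1 - t * r) \<le> (1 - t) powr (-\<gamma>) / (1 - t)"
    using t r one_minus_mult_pos[of t r] by (intro divide_left_mono) (auto simp: mult_right_le_one_le)
  also have "\<dots> = (1 - t) powr (-\<gamma> - 1)"
    using t by (simp add: powr_diff)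
  finally show ?thesis
    using False by simp
qed

lemma one_minus_mult_le_double:
  fixes b t :: real
  assumes "0 \<le> b" "b \<le> t"
  shows "1 - b * t \<le> 2 * (1 - b)"
proof -
  have "b * b \<le> b * t"
    using mult_left_mono[OF assms(2,1)] .
  moreover have "0 \<le> 1 - 2 * b + b * b"
    using zero_le_square[of "1 - b"] by (simp add: algebra_simps)
  ultimately show ?thesis
    by (simp add: algebra_simps)
qed

lemma ex_powr2_bracket:
  fixes x :: real
  assumes "1 \<le> x"
  shows "\<exists>k::nat. 2 powr real k \<le> x \<and> x < 2 powr (real k + 1)"
proof -
  define j where "j = \<lfloor>log 2 x\<rfloor>"
  have "2 powr j \<le> x \<and> x < 2 powr (j + 1)"
    using floor_log_eq_powr_iff[of x 2 j] assms by (simp add: j_def)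
  moreover have "0 \<le> j"
    using assms by (simp add: j_def)
  ultimately show ?thesis
    by (intro exI[of _ "nat j"]) simp
qed

lemma dyadic_shell_near:
  fixes r t \<gamma> :: real
  assumes rt: "r \<le> t" "t < 1" and \<gamma>: "0 \<le> \<gamma>"
  shows "\<exists>k::nat. 1 - (1 - r) * 2 powr (-real k) \<le> t
    \<and> (1 - t) powr (-\<gamma>) \<le> ((1 - r) * 2 powr (-(real k + 1))) powr (-\<gamma>)"
proof -
  obtain k :: nat where k: "2 powr real k \<le> (1 - r) / (1 - t)" "(1 - r) / (1 - t) < 2 powr (real k + 1)"
    using ex_powr2_bracket[of "(1 - r) / (1 - t)"] rt by auto
  have "1 - t \<le> (1 - r) * 2 powr (-real k)"
    using k(1) rt by (simp add: powr_minus_divide field_simps)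
  moreover have "(1 - t) powr (-\<gamma>) \<le> ((1 - r) * 2 powr (-(real k + 1))) powr (-\<gamma>)"
  proof (rule powr_mono2')
    have "1 - r < (1 - t) * 2 powr (real k + 1)"
      using k(2) rt by (simp add: divide_less_eq mult.commute)
    then show "(1 - r) * 2 powr (-(real k + 1)) \<le> 1 - t"
      by (simp only: powr_minus_divide) (simp add: pos_divide_le_eq)
  qed (use \<gamma> rt in auto)
  ultimately show ?thesis
    by (intro exI[of _ k]) auto
qed

lemma dyadic_shell_far:
  fixes r t \<gamma> :: real
  assumes rt: "t < r" "r < 1" and \<gamma>: "0 < \<gamma>"
  shows "\<exists>k::nat. 1 - (1 - r) * 2 powr (real k + 1) \<le> t
    \<and> (1 - t) powr (-\<gamma> - 1) \<le> ((1 - r) * 2 powr real k) powr (-\<gamma> - 1)"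
proof -
  obtain k :: nat where k: "2 powr real k \<le> (1 - t) / (1 - r)" "(1 - t) / (1 - r) < 2 powr (real k + 1)"
    using ex_powr2_bracket[of "(1 - t) / (1 - r)"] rt by auto
  have "1 - t < (1 - r) * 2 powr (real k + 1)"
    using k(2) rt by (simp add: divide_less_eq mult.commute)
  moreover have "(1 - t) powr (-\<gamma> - 1) \<le> ((1 - r) * 2 powr real k) powr (-\<gamma> - 1)"
  proof (rule powr_mono2')
    show "(1 - r) * 2 powr real k \<le> 1 - t"
      using k(1) rt by (simp add: le_divide_eq mult.commute)
  qed (use \<gamma> rt in auto)
  ultimately show ?thesis
    by (intro exI[of _ k]) auto
qed

lemma nn_integral_le_suminf_cover:
  fixes \<phi> :: "'b \<Rightarrow> ennreal" and c :: "nat \<Rightarrow> ennreal"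
  assumes A: "\<And>k. A k \<in> sets M"
    and cover: "\<And>t. t \<in> space M \<Longrightarrow> \<phi> t \<noteq> 0 \<Longrightarrow> \<exists>k. t \<in> A k \<and> \<phi> t \<le> c k"
  shows "(\<integral>\<^sup>+t. \<phi> t \<partial>M) \<le> (\<Sum>k. c k * emeasure M (A k))"
proof -
  have "(\<integral>\<^sup>+t. \<phi> t \<partial>M) \<le> (\<integral>\<^sup>+t. (\<Sum>k. c k * indicator (A k) t) \<partial>M)"
  proof (rule nn_integral_mono)
    fix t assume t: "t \<in> space M"
    show "\<phi> t \<le> (\<Sum>k. c k * indicator (A k) t)"
    proof (cases "\<phi> t = 0")
      case False
      then obtain k where "t \<in> A k" "\<phi> t \<le> c k"
        using cover[OF t] by blast
      then show ?thesis
        using sum_le_suminf[OF summableI, of "{k}" "\<lambda>k. c k * indicator (A k) t"] by simp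
    qed simp
  qed
  also have "\<dots> = (\<Sum>k. c k * emeasure M (A k))"
    using A by (simp add: nn_integral_suminf nn_integral_cmult_indicator)
  finally show ?thesis .
qed

lemma suminf_ennreal_le_geometric:
  fixes a q :: real and b :: "nat \<Rightarrow> ennreal"
  assumes "\<And>k. b k \<le> ennreal (a * q ^ k)" "0 \<le> a" "0 \<le> q" "q < 1"
  shows "(\<Sum>k. b k) \<le> ennreal (a / (1 - q))"
proof -
  have "(\<Sum>k. b k) \<le> (\<Sum>k. ennreal (a * q ^ k))"
    using assms(1) by (intro suminf_le summableI)
  also have "\<dots> = ennreal (a / (1 - q))"
  proof (rule suminf_ennreal_eq)
    show "(\<lambda>k. a * q ^ k) sums (a / (1 - q))"
      using sums_mult[OF geometric_sums, of q a] assms(3,4) by simp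
  qed (use assms(2,3) in simp)
  finally show ?thesis .
qed

lemma integrable_integral_le_of_nn_integral_le:
  fixes f :: "'b \<Rightarrow> real"
  assumes f: "f \<in> borel_measurable M" "\<And>x. x \<in> space M \<Longrightarrow> 0 \<le> f x"
    and le: "(\<integral>\<^sup>+x. ennreal (f x) \<partial>M) \<le> ennreal B" and B: "0 \<le> B"
  shows "integrable M f" and "integral\<^sup>L M f \<le> B"
proof -
  have "(\<integral>\<^sup>+x. ennreal (norm (f x)) \<partial>M) = (\<integral>\<^sup>+x. ennreal (f x) \<partial>M)"
    using f(2) by (intro nn_integral_cong) simp
  also have "\<dots> < \<infinity>"
    using le by (simp add: le_less_trans)
  finally show "integrable M f"
    using f(1) by (intro integrableI_bounded)
  have "integral\<^sup>L M f = enn2real (\<integral>\<^sup>+x. ennreal (f x) \<partial>M)"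
    using f by (intro integral_eq_nn_integral AE_I2)
  also have "\<dots> \<le> B"
    using le B by (simp add: enn2real_leI)
  finally show "integral\<^sup>L M f \<le> B" .
qed

section \<open>The weighted space\<close>

lemma Hv_holomorphic: "f \<in> Hv \<gamma> \<Longrightarrow> f holomorphic_on ball 0 1"
  unfolding Hv_def by auto

lemma Hv_weighted_le_normv:
  "f \<in> Hv \<gamma> \<Longrightarrow> z \<in> ball 0 1 \<Longrightarrow> (1 - norm z) powr \<gamma> * norm (f z) \<le> normv \<gamma> f"
  unfolding Hv_def normv_def by (intro cSUP_upper) auto

lemma normv_nonneg: "f \<in> Hv \<gamma> \<Longrightarrow> 0 \<le> normv \<gamma> f"
  using Hv_weighted_le_normv[of f \<gamma> 0] by (auto intro: order_trans[OF norm_ge_zero])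

lemma Hv_norm_le:
  assumes "f \<in> Hv \<gamma>" "z \<in> ball 0 1"
  shows "norm (f z) \<le> normv \<gamma> f * (1 - norm z) powr (-\<gamma>)"
proof -
  have "norm z < 1" using assms(2) by simp
  then have "norm (f z) = (1 - norm z) powr \<gamma> * norm (f z) * (1 - norm z) powr (-\<gamma>)"
    by (simp add: powr_minus field_simps)
  also have "\<dots> \<le> normv \<gamma> f * (1 - norm z) powr (-\<gamma>)"
    by (intro mult_right_mono Hv_weighted_le_normv assms) simp
  finally show ?thesis .
qed

lemma HvI:
  assumes "f holomorphic_on ball 0 1"
    and "\<And>z. z \<in> ball 0 1 \<Longrightarrow> (1 - norm z) powr \<gamma> * norm (f z) \<le> B"
  shows "f \<in> Hv \<gamma>" and "normv \<gamma> f \<le> B"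
  using assms unfolding Hv_def normv_def by (auto intro!: bdd_aboveI2 cSUP_least)

lemma Hv_diff:
  assumes "f \<in> Hv \<gamma>" "g \<in> Hv \<gamma>"
  shows "(\<lambda>z. f z - g z) \<in> Hv \<gamma>"
proof (rule HvI)
  show "(\<lambda>z. f z - g z) holomorphic_on ball 0 1"
    using assms by (intro holomorphic_intros Hv_holomorphic)
  fix z :: complex assume z: "z \<in> ball 0 1"
  have "(1 - norm z) powr \<gamma> * norm (f z - g z)
      \<le> (1 - norm z) powr \<gamma> * norm (f z) + (1 - norm z) powr \<gamma> * norm (g z)"
    by (simp add: distrib_left[symmetric] mult_left_mono norm_triangle_ineq4)
  also have "\<dots> \<le> normv \<gamma> f + normv \<gamma> g"
    using Hv_weighted_le_normv[OF _ z] assms by (intro add_mono)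
  finally show "(1 - norm z) powr \<gamma> * norm (f z - g z) \<le> normv \<gamma> f + normv \<gamma> g" .
qed

lemma normv_tendsto_imp_pointwise:
  fixes F :: "nat \<Rightarrow> complex \<Rightarrow> complex" and g :: "complex \<Rightarrow> complex" and z :: complex
  assumes "\<And>n. F n \<in> Hv \<gamma>" "g \<in> Hv \<gamma>" "(\<lambda>n. normv \<gamma> (\<lambda>z. F n z - g z)) \<longlonglongrightarrow> 0"
    and z: "z \<in> ball 0 1"
  shows "(\<lambda>n. F n z) \<longlonglongrightarrow> g z"
proof -
  have "(\<lambda>n. normv \<gamma> (\<lambda>z. F n z - g z) * (1 - norm z) powr (-\<gamma>)) \<longlonglongrightarrow> 0"
    using assms(3) by (rule tendsto_mult_left_zero)
  then have "(\<lambda>n. F n z - g z) \<longlonglongrightarrow> 0"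
    by (rule Lim_null_comparison[rotated])
      (use Hv_norm_le[OF Hv_diff[OF assms(1,2)] z] in auto)
  then show ?thesis
    by (rule LIM_zero_cancel)
qed

lemma inverse_one_minus_in_Hv:
  assumes "1 \<le> \<gamma>"
  shows "(\<lambda>z. 1 / (1 - z)) \<in> Hv \<gamma>"
proof (rule HvI)
  show "(\<lambda>z. 1 / (1 - z)) holomorphic_on ball 0 1"
    by (intro holomorphic_intros) auto
  fix z :: complex assume "z \<in> ball 0 1"
  then have z: "norm z < 1"
    by simp
  have "(1 - norm z) powr \<gamma> \<le> (1 - norm z) powr 1"
    using z assms by (intro powr_mono') auto
  also have "\<dots> \<le> norm (1 - z)"
    using z norm_triangle_ineq2[of 1 z] by simp
  finally show "(1 - norm z) powr \<gamma> * norm (1 / (1 - z)) \<le> 1"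
    using z by (simp add: norm_divide divide_le_eq_1)
qed

definition test_fun :: "real \<Rightarrow> real \<Rightarrow> complex \<Rightarrow> complex" where
  "test_fun \<gamma> b z = of_real ((1 - b) powr (1 - \<gamma>)) / (1 - of_real b * z)"

lemma test_fun_Hv:
  assumes \<gamma>: "0 \<le> \<gamma>" "\<gamma> \<le> 1" and b: "0 \<le> b" "b < 1"
  shows "test_fun \<gamma> b \<in> Hv \<gamma>" and "normv \<gamma> (test_fun \<gamma> b) \<le> 1"
proof -
  have denom: "1 - b * norm z \<le> norm (1 - of_real b * z)" "0 < 1 - b * norm z"
    if "z \<in> ball 0 1" for z :: complex
    using that b norm_one_minus_mult_ge[of b z] one_minus_mult_pos[of b "norm z"] by auto
  have "test_fun \<gamma> b holomorphic_on ball 0 1"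
    unfolding test_fun_def[abs_def] using denom by (intro holomorphic_intros) force
  moreover have "(1 - norm z) powr \<gamma> * norm (test_fun \<gamma> b z) \<le> 1" if z: "z \<in> ball 0 1" for z
  proof -
    have "(1 - norm z) powr \<gamma> * (1 - b) powr (1 - \<gamma>) \<le> 1 - b * norm z"
      using z b \<gamma> by (intro powr_interpolate_le) (auto intro: mult_left_le_one_le mult_right_le_one_le)
    also have "\<dots> \<le> norm (1 - of_real b * z)"
      using denom[OF z] by simp
    finally show ?thesis
      using denom[OF z] by (simp add: test_fun_def norm_divide divide_le_eq_1)
  qed
  ultimately show "test_fun \<gamma> b \<in> Hv \<gamma>" and "normv \<gamma> (test_fun \<gamma> b) \<le> 1"
    by (blast intro: HvI)+
qed

(* Interpolating 1 - b t >= (1 - t)^beta (1 - b)^(1 - beta) with beta > gamma trades the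
   integrable weight (1 - t)^(-beta) for a factor (1 - b)^(beta - gamma) that vanishes as b -> 1. *)
lemma test_fun_quotient_le:
  assumes \<beta>: "0 \<le> \<beta>" "\<beta> \<le> 1" and b: "0 \<le> b" "b < 1" and t: "0 \<le> t" "t < 1" and z: "norm z < 1"
  shows "norm (test_fun \<gamma> b (of_real t) / (1 - of_real t * z))
    \<le> (1 - b) powr (\<beta> - \<gamma>) / (1 - norm z) * (1 - t) powr (-\<beta>)"
proof -
  define m where "m = 1 - b * t"
  have m: "1 - t \<le> m" "1 - b \<le> m" "0 < m"
    using t b one_minus_mult_pos[of b t] by (auto simp: m_def mult_left_le_one_le mult_right_le_one_le)
  have denom: "1 - norm z \<le> norm (1 - of_real t * z)"
    using norm_one_minus_mult_ge[of t z] mult_left_le_one_le[of "norm z" t] t by simp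
  have "1 - of_real b * of_real t = (of_real m :: complex)"
    by (simp add: m_def)
  then have test_fun_norm: "norm (test_fun \<gamma> b (of_real t)) = (1 - b) powr (1 - \<gamma>) / m"
    using m(3) by (simp add: test_fun_def norm_divide)
  have "(1 - b) powr (1 - \<gamma>) / m
      \<le> (1 - b) powr (1 - \<gamma>) / ((1 - t) powr \<beta> * (1 - b) powr (1 - \<beta>))"
    using m t b \<beta> by (intro divide_left_mono powr_interpolate_le mult_pos_pos) auto
  also have "\<dots> = (1 - b) powr (\<beta> - \<gamma>) * (1 - t) powr (-\<beta>)"
    using t b by (simp add: powr_minus_divide powr_diff field_simps powr_add[symmetric])
  finally have numer: "(1 - b) powr (1 - \<gamma>) / m \<le> (1 - b) powr (\<beta> - \<gamma>) * (1 - t) powr (-\<beta>)" .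
  have "norm (test_fun \<gamma> b (of_real t) / (1 - of_real t * z))
      = (1 - b) powr (1 - \<gamma>) / m / norm (1 - of_real t * z)"
    by (simp add: norm_divide test_fun_norm)
  also have "\<dots> \<le> (1 - b) powr (\<beta> - \<gamma>) * (1 - t) powr (-\<beta>) / (1 - norm z)"
    using numer denom z by (intro frac_le) auto
  finally show ?thesis
    by simp
qed

section \<open>Finite measures on the unit interval\<close>

locale unit_interval_measure = finite_measure \<mu> for \<mu> :: "real measure" +
  assumes sets_eq: "sets \<mu> = sets (restrict_space borel {0..<1})"
begin

lemma space_eq: "space \<mu> = {0..<1}"
  using sets_eq_imp_space_eq[OF sets_eq] by simp

lemma measurable_continuous_on:
  "continuous_on {0..<1} g \<Longrightarrow> g \<in> borel_measurable \<mu>"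
  using measurable_cong_sets[OF sets_eq refl] borel_measurable_continuous_on_restrict by blast

lemma borel_measurable_restrict:
  "f \<in> borel_measurable borel \<Longrightarrow> f \<in> borel_measurable \<mu>"
  using measurable_cong_sets[OF sets_eq refl] measurable_restrict_space1 by blast

lemma tail_in_sets: "{t \<in> space \<mu>. s \<le> t} \<in> sets \<mu>"
proof -
  have "(\<lambda>t. t) \<in> borel_measurable \<mu>"
    by (rule measurable_continuous_on) (intro continuous_intros)
  then show ?thesis by measurable
qed

lemma tail_eq: "0 \<le> s \<Longrightarrow> {t \<in> space \<mu>. s \<le> t} = {s..<1}"
  by (auto simp: space_eq)

lemma carleson_imp_tail_bound:
  assumes "carleson \<mu>"
  shows "\<exists>C>0. \<forall>s<1. measure \<mu> {t \<in> space \<mu>. s \<le> t} \<le> C * (1 - s)"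
proof -
  obtain c where c: "c > 0"
    "eventually (\<lambda>t. norm (measure \<mu> {t..<1}) \<le> c * norm (1 - t)) (at_left (1::real))"
    using assms unfolding carleson_def by (elim landau_o.bigE) auto
  then obtain b0 where b0: "b0 < 1"
    "\<And>s. b0 < s \<Longrightarrow> s < 1 \<Longrightarrow> norm (measure \<mu> {s..<1}) \<le> c * norm (1 - s)"
    unfolding eventually_at_left_field by blast
  define b where "b = max b0 0"
  have b: "0 \<le> b" "b < 1" "\<And>s. b < s \<Longrightarrow> s < 1 \<Longrightarrow> measure \<mu> {s..<1} \<le> c * (1 - s)"
    using b0 by (auto simp: b_def)
  define C where "C = max c (measure \<mu> (space \<mu>) / (1 - b))"
  have "measure \<mu> {t \<in> space \<mu>. s \<le> t} \<le> C * (1 - s)" if s: "s < 1" for s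
  proof (cases "s \<le> b")
    case True
    have "measure \<mu> {t \<in> space \<mu>. s \<le> t} \<le> measure \<mu> (space \<mu>) / (1 - b) * (1 - b)"
      using b by (simp add: bounded_measure)
    also have "\<dots> \<le> C * (1 - s)"
      using True b c(1) by (intro mult_mono) (auto simp: C_def)
    finally show ?thesis .
  next
    case False
    then have "measure \<mu> {t \<in> space \<mu>. s \<le> t} \<le> c * (1 - s)"
      using b s by (simp add: tail_eq)
    also have "\<dots> \<le> C * (1 - s)"
      using s by (intro mult_right_mono) (auto simp: C_def)
    finally show ?thesis .
  qed
  moreover have "C > 0"
    using c by (simp add: C_def)
  ultimately show ?thesis by blast
qed

lemma not_vanishing_carleson_imp_seq:
  assumes "\<not> vanishing_carleson \<mu>"
  obtains c b where "0 < c" "\<And>n. 0 \<le> b n" "\<And>n. b n < 1"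
    "\<And>n. c * (1 - b n) < measure \<mu> {b n..<1}" "b \<longlonglongrightarrow> 1"
proof -
  obtain c where c: "0 < c"
    and not_ev: "\<not> eventually (\<lambda>t. norm (measure \<mu> {t..<1}) \<le> c * norm (1 - t)) (at_left (1::real))"
    using assms unfolding vanishing_carleson_def by (metis landau_o.smallI)
  have "\<exists>t. 1 - 1 / real (Suc n) < t \<and> t < 1 \<and> c * (1 - t) < measure \<mu> {t..<1}" for n
  proof (rule ccontr)
    assume "\<not> ?thesis"
    then have "measure \<mu> {t..<1} \<le> c * (1 - t)" if "1 - 1 / real (Suc n) < t" "t < 1" for t
      using that not_less by blast
    then have "eventually (\<lambda>t. norm (measure \<mu> {t..<1}) \<le> c * norm (1 - t)) (at_left (1::real))"
      unfolding eventually_at_left_field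
      by (intro exI[of _ "1 - 1 / real (Suc n)"]) auto
    with not_ev show False ..
  qed
  then obtain b where b: "\<And>n. 1 - 1 / real (Suc n) < b n" "\<And>n. b n < 1"
    "\<And>n. c * (1 - b n) < measure \<mu> {b n..<1}"
    by metis
  have b0: "0 \<le> b n" for n
  proof -
    have "1 / real (Suc n) \<le> 1"
      by simp
    then show ?thesis
      using b(1)[of n] by linarith
  qed
  have lower: "(\<lambda>n. 1 - 1 / real (Suc n)) \<longlonglongrightarrow> 1"
    using tendsto_diff[OF tendsto_const LIMSEQ_inverse_real_of_nat, of 1]
    by (simp add: inverse_eq_divide)
  have "b \<longlonglongrightarrow> 1"
  proof (rule tendsto_sandwich[OF _ _ lower tendsto_const])
    show "\<forall>\<^sub>F n in sequentially. 1 - 1 / real (Suc n) \<le> b n"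
      using b(1) by (intro always_eventually allI less_imp_le)
    show "\<forall>\<^sub>F n in sequentially. b n \<le> 1"
      using b(2) by (intro always_eventually allI less_imp_le)
  qed
  with c b0 b show ?thesis
    using that by blast
qed

lemma tail_set_integral_tendsto_zero:
  fixes g :: "real \<Rightarrow> real"
  assumes g: "integrable \<mu> g"
  shows "(\<lambda>n. LINT t:{t \<in> space \<mu>. 1 - 1 / real (Suc n) \<le> t}|\<mu>. g t) \<longlonglongrightarrow> 0"
proof -
  define A where "A n = {t \<in> space \<mu>. 1 - 1 / real (Suc n) \<le> t}" for n
  have "(\<lambda>n. LINT t:A n|\<mu>. g t) \<longlonglongrightarrow> (LINT t:(\<Inter>n. A n)|\<mu>. g t)"
  proof (rule set_integral_cont_down)
    show "decseq A"
      unfolding A_def decseq_def by (auto simp: frac_le elim!: order_trans[rotated])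
    show "A n \<in> sets \<mu>" for n
      unfolding A_def by (rule tail_in_sets)
    show "set_integrable \<mu> (A 0) g"
      unfolding set_integrable_def A_def using g by (intro integrable_mult_indicator tail_in_sets)
  qed
  moreover have "(\<Inter>n. A n) = {}"
  proof safe
    fix t assume "t \<in> (\<Inter>n. A n)"
    then have t: "t < 1" "\<And>n. 1 - 1 / real (Suc n) \<le> t"
      by (auto simp: A_def space_eq)
    obtain n where "1 / real (Suc n) < 1 - t"
      using reals_Archimedean[of "1 - t"] t(1) by (auto simp: inverse_eq_divide)
    with t(2)[of n] show "t \<in> {}"
      by simp
  qed
  ultimately show ?thesis
    by (simp add: A_def set_lebesgue_integral_def)
qed

lemma measure_tail_le_set_integral:
  assumes g: "integrable \<mu> (\<lambda>t. 1 / (1 - t))" and s: "0 \<le> s" "s0 \<le> s" "s < 1"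
  shows "measure \<mu> {s..<1} \<le> (1 - s) * (LINT t:{t \<in> space \<mu>. s0 \<le> t}|\<mu>. 1 / (1 - t))"
proof -
  let ?A = "{t \<in> space \<mu>. s0 \<le> t}"
  have "measure \<mu> {s..<1} = (\<integral>t. indicator {t \<in> space \<mu>. s \<le> t} t \<partial>\<mu>)"
    using tail_in_sets[of s] by (simp add: tail_eq[OF s(1)])
  also have "\<dots> \<le> (\<integral>t. (1 - s) * (indicator ?A t *\<^sub>R (1 / (1 - t))) \<partial>\<mu>)"
  proof (rule integral_mono)
    show "integrable \<mu> (\<lambda>t. indicator {t \<in> space \<mu>. s \<le> t} t :: real)"
      by (intro integrable_real_indicator tail_in_sets) (simp add: emeasure_eq_measure)
    show "integrable \<mu> (\<lambda>t. (1 - s) * (indicator ?A t *\<^sub>R (1 / (1 - t))))"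
      using g by (intro integrable_mult_right integrable_mult_indicator tail_in_sets)
    fix t assume t: "t \<in> space \<mu>"
    show "indicator {t \<in> space \<mu>. s \<le> t} t \<le> (1 - s) * (indicator ?A t *\<^sub>R (1 / (1 - t)))"
    proof (cases "s \<le> t")
      case True
      then have "t \<in> ?A" "1 \<le> (1 - s) / (1 - t)"
        using t s by (auto simp: space_eq)
      then show ?thesis
        using t True by simp
    qed (use t s in \<open>simp add: space_eq\<close>)
  qed
  also have "\<dots> = (1 - s) * (LINT t:?A|\<mu>. 1 / (1 - t))"
    unfolding set_lebesgue_integral_def by (rule integral_mult_right_zero)
  finally show ?thesis .
qed

lemma integrable_imp_vanishing_carleson:
  assumes g: "integrable \<mu> (\<lambda>t. 1 / (1 - t))"
  shows "vanishing_carleson \<mu>"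
  unfolding vanishing_carleson_def
proof (rule landau_o.smallI)
  fix c :: real assume c: "0 < c"
  define s0 where "s0 n = 1 - 1 / real (Suc n)" for n
  obtain n where n: "(LINT t:{t \<in> space \<mu>. s0 n \<le> t}|\<mu>. 1 / (1 - t)) < c"
    using order_tendstoD(2)[OF tail_set_integral_tendsto_zero[OF g] c]
    by (auto simp: eventually_sequentially s0_def)
  have "measure \<mu> {s..<1} \<le> c * (1 - s)" if s: "s0 n < s" "s < 1" for s
  proof -
    have "1 / real (Suc n) \<le> 1"
      by simp
    then have "0 \<le> s"
      using s(1) unfolding s0_def by linarith
    then have "measure \<mu> {s..<1} \<le> (1 - s) * (LINT t:{t \<in> space \<mu>. s0 n \<le> t}|\<mu>. 1 / (1 - t))"
      using s by (intro measure_tail_le_set_integral g) auto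
    also have "\<dots> \<le> (1 - s) * c"
      using n s by (intro mult_left_mono) auto
    finally show ?thesis
      by (simp add: mult.commute)
  qed
  then show "\<forall>\<^sub>F s in at_left 1. norm (measure \<mu> {s..<1}) \<le> c * norm (1 - s)"
    unfolding eventually_at_left_field
    by (intro exI[of _ "s0 n"]) (auto simp: s0_def)
qed

lemma measurable_cauchy_integrand:
  assumes "f holomorphic_on ball 0 1" "norm z < 1"
  shows "(\<lambda>t. f (of_real t) / (1 - of_real t * z)) \<in> borel_measurable \<mu>"
proof (rule measurable_continuous_on)
  have "continuous_on {0..<1} (\<lambda>t::real. f (of_real t))"
    using holomorphic_on_imp_continuous_on[OF assms(1)]
    by (rule continuous_on_compose2) (auto intro!: continuous_intros)
  moreover have "1 - of_real t * z \<noteq> 0" if "t \<in> {0..<1}" for t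
    using norm_one_minus_mult_ge[of t z] one_minus_mult_pos[of t "norm z"] that assms(2)
    by auto
  ultimately show "continuous_on {0..<1} (\<lambda>t. f (of_real t) / (1 - of_real t * z))"
    by (intro continuous_intros) auto
qed

lemma norm_of_real_mult_power_le:
  fixes z :: complex
  shows "t \<in> space \<mu> \<Longrightarrow> norm ((of_real t * z) ^ i) \<le> norm z ^ i"
  unfolding norm_power by (intro power_mono) (auto simp: space_eq norm_mult intro: mult_left_le_one_le)

lemma integrable_mult_power:
  fixes h :: "real \<Rightarrow> complex"
  assumes h: "integrable \<mu> h" and z: "norm z \<le> 1"
  shows "integrable \<mu> (\<lambda>t. h t * (of_real t * z) ^ i)"
proof (rule Bochner_Integration.integrable_bound)
  show "integrable \<mu> (\<lambda>t. norm (h t))"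
    using h by simp
  have "(\<lambda>t. complex_of_real t) \<in> borel_measurable \<mu>"
    by (rule measurable_continuous_on) (intro continuous_intros)
  then show "(\<lambda>t. h t * (of_real t * z) ^ i) \<in> borel_measurable \<mu>"
    using h by measurable
  have "norm (h t * (of_real t * z) ^ i) \<le> norm (h t)" if "t \<in> space \<mu>" for t
    using order_trans[OF norm_of_real_mult_power_le[OF that] power_le_one[of "norm z" i]] z
    by (auto simp: norm_mult intro: mult_left_le)
  then show "AE t in \<mu>. norm (h t * (of_real t * z) ^ i) \<le> norm (norm (h t))"
    by (intro AE_I2) simp
qed

lemma cauchy_transform_sums:
  fixes h :: "real \<Rightarrow> complex"
  assumes h: "integrable \<mu> h" and z: "norm z < 1"
  shows "(\<lambda>n. (\<integral>t. h t * of_real t ^ n \<partial>\<mu>) * z ^ n) sums (\<integral>t. h t / (1 - of_real t * z) \<partial>\<mu>)"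
proof -
  define S where "S n t = (\<Sum>i<n. h t * (of_real t * z) ^ i)" for n t
  have S_le: "norm (S n t) \<le> norm (h t) / (1 - norm z)" if "t \<in> space \<mu>" for n t
  proof -
    have "norm (S n t) \<le> norm (h t) * (\<Sum>i<n. norm z ^ i)"
      unfolding S_def sum_distrib_left[symmetric]
      by (auto simp: norm_mult intro!: order_trans[OF norm_sum] sum_mono
          mult_left_mono norm_of_real_mult_power_le[OF that])
    also have "\<dots> \<le> norm (h t) * (\<Sum>i. norm z ^ i)"
      using z by (intro mult_left_mono sum_le_suminf summable_geometric) auto
    also have "\<dots> = norm (h t) / (1 - norm z)"
      using z by (simp add: suminf_geometric divide_inverse)
    finally show ?thesis .
  qed
  have term_integrable: "integrable \<mu> (\<lambda>t. h t * (of_real t * z) ^ i)" for i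
    using h z by (intro integrable_mult_power) auto
  then have S_integrable: "integrable \<mu> (S n)" for n
    unfolding S_def by (rule Bochner_Integration.integrable_sum)
  have "(\<lambda>n. integral\<^sup>L \<mu> (S n)) \<longlonglongrightarrow> (\<integral>t. h t / (1 - of_real t * z) \<partial>\<mu>)"
  proof (rule integral_dominated_convergence[where w = "\<lambda>t. norm (h t) / (1 - norm z)"])
    show "AE t in \<mu>. (\<lambda>n. S n t) \<longlonglongrightarrow> h t / (1 - of_real t * z)"
    proof (rule AE_I2)
      fix t assume "t \<in> space \<mu>"
      then have "norm (of_real t * z) < 1"
        using norm_of_real_mult_power_le[of t z 1] z by simp
      then have "(\<lambda>i. (of_real t * z) ^ i) sums (1 / (1 - of_real t * z))"
        by (rule geometric_sums)
      then show "(\<lambda>n. S n t) \<longlonglongrightarrow> h t / (1 - of_real t * z)"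
        unfolding S_def sums_def by (auto dest: tendsto_mult_left[where c = "h t"]
            simp: sum_distrib_left[symmetric])
    qed
    have "(\<lambda>t. complex_of_real t) \<in> borel_measurable \<mu>"
      by (rule measurable_continuous_on) (intro continuous_intros)
    then show "(\<lambda>t. h t / (1 - of_real t * z)) \<in> borel_measurable \<mu>"
      using h by measurable
  qed (use h S_integrable S_le in \<open>auto intro!: AE_I2\<close>)
  moreover have "integral\<^sup>L \<mu> (S n) = (\<Sum>i<n. (\<integral>t. h t * of_real t ^ i \<partial>\<mu>) * z ^ i)" for n
    using term_integrable unfolding S_def
    by (simp add: integral_sum power_mult_distrib mult.assoc[symmetric])
  ultimately show ?thesis
    unfolding sums_def by simp
qed

lemma holomorphic_on_cauchy_transform:
  fixes h :: "real \<Rightarrow> complex"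
  assumes "integrable \<mu> h"
  shows "(\<lambda>z. \<integral>t. h t / (1 - of_real t * z) \<partial>\<mu>) holomorphic_on ball 0 1"
  using cauchy_transform_sums[OF assms]
  by (intro power_series_holomorphic[where a = "\<lambda>n. \<integral>t. h t * of_real t ^ n \<partial>\<mu>"]) simp

lemma Imu_not_well_defined:
  assumes "\<not> vanishing_carleson \<mu>" "1 \<le> \<gamma>"
  shows "\<not> Imu_well_defined \<mu> \<gamma>"
proof
  assume "Imu_well_defined \<mu> \<gamma>"
  from this[unfolded Imu_well_defined_def, THEN bspec, OF inverse_one_minus_in_Hv[OF assms(2)]]
  have "\<forall>z\<in>ball 0 1. integrable \<mu> (\<lambda>t. 1 / (1 - of_real t) / (1 - of_real t * z) :: complex)"
    by (rule conjunct1)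
  then have "integrable \<mu> (\<lambda>t. 1 / (1 - of_real t) / (1 - of_real t * 0) :: complex)"
    by (rule bspec) simp
  then have "integrable \<mu> (\<lambda>t. 1 / (1 - of_real t) :: complex)"
    by simp
  then have "integrable \<mu> (\<lambda>t. norm (1 / (1 - of_real t) :: complex))"
    by (rule integrable_norm)
  also have "?this \<longleftrightarrow> integrable \<mu> (\<lambda>t. 1 / (1 - t))"
  proof (rule Bochner_Integration.integrable_cong[OF refl])
    fix t assume "t \<in> space \<mu>"
    moreover have "1 - complex_of_real t = of_real (1 - t)"
      by simp
    ultimately have "norm (1 - complex_of_real t) = 1 - t"
      by (simp only: norm_of_real) (simp add: space_eq)
    then show "norm (1 / (1 - of_real t) :: complex) = 1 / (1 - t)"
      by (simp add: norm_divide)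
  qed
  finally show False
    using integrable_imp_vanishing_carleson assms(1) by blast
qed

lemma squared_kernel_integral_ge:
  assumes b: "0 \<le> b" "b < 1" and a: "0 \<le> a"
  shows "integrable \<mu> (\<lambda>t. a / (1 - b * t) ^ 2)"
    and "a / (2 * (1 - b)) ^ 2 * measure \<mu> {b..<1} \<le> (\<integral>t. a / (1 - b * t) ^ 2 \<partial>\<mu>)"
proof -
  define h where "h t = a / (1 - b * t) ^ 2" for t
  have pos: "0 < 1 - b * t" if "t \<in> space \<mu>" for t
    using that b by (intro one_minus_mult_pos) (auto simp: space_eq)
  have "norm (h t) \<le> a / (1 - b) ^ 2" if "t \<in> space \<mu>" for t
    using that a b pos[OF that] unfolding h_def
    by (auto simp: space_eq mult_right_le_one_le intro!: divide_left_mono power_mono)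
  then show h_integrable: "integrable \<mu> (\<lambda>t. a / (1 - b * t) ^ 2)"
    unfolding h_def[symmetric]
    by (intro integrable_const_bound[where B = "a / (1 - b) ^ 2"] AE_I2 borel_measurable_restrict)
      (auto simp: h_def)
  have "a / (2 * (1 - b)) ^ 2 * indicator {b..<1} t \<le> h t" if "t \<in> space \<mu>" for t
  proof (cases "b \<le> t")
    case True
    then have "a / (2 * (1 - b)) ^ 2 \<le> h t"
      unfolding h_def using a pos[OF that] one_minus_mult_le_double[OF b(1) True]
      by (intro divide_left_mono power_mono) auto
    then show ?thesis
      using True that by (simp add: space_eq)
  qed (use a pos[OF that] in \<open>simp add: h_def\<close>)
  then have "(\<integral>t. a / (2 * (1 - b)) ^ 2 * indicator {b..<1} t \<partial>\<mu>) \<le> (\<integral>t. h t \<partial>\<mu>)"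
    using tail_in_sets[of b] h_integrable
    by (intro integral_mono) (auto simp: tail_eq[OF b(1)] emeasure_eq_measure h_def)
  then show "a / (2 * (1 - b)) ^ 2 * measure \<mu> {b..<1} \<le> (\<integral>t. a / (1 - b * t) ^ 2 \<partial>\<mu>)"
    using tail_in_sets[of b] by (simp add: tail_eq[OF b(1)] h_def)
qed

lemma Imu_test_fun_lower_bound:
  assumes b: "0 \<le> b" "b < 1"
  shows "measure \<mu> {b..<1} / (4 * (1 - b)) \<le> (1 - b) powr \<gamma> * norm (Imu \<mu> (test_fun \<gamma> b) (of_real b))"
proof -
  define a where "a = (1 - b) powr (1 - \<gamma>)"
  have "Imu \<mu> (test_fun \<gamma> b) (of_real b) = of_real (\<integral>t. a / (1 - b * t) ^ 2 \<partial>\<mu>)"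
    unfolding Imu_def test_fun_def a_def integral_complex_of_real[symmetric]
    by (intro Bochner_Integration.integral_cong) (simp_all add: power2_eq_square mult.commute)
  then have lower: "(1 - b) powr \<gamma> * (a / (2 * (1 - b)) ^ 2 * measure \<mu> {b..<1})
      \<le> (1 - b) powr \<gamma> * norm (Imu \<mu> (test_fun \<gamma> b) (of_real b))"
    using squared_kernel_integral_ge[OF b, of a] by (intro mult_left_mono) (auto simp: a_def)
  have const: "(1 - b) powr \<gamma> * (a / (2 * (1 - b)) ^ 2) = 1 / (4 * (1 - b))"
  proof -
    have quot: "x / (2 * x) ^ 2 = 1 / (4 * x)" if "x \<noteq> 0" for x :: real
      using that by (simp add: power2_eq_square field_simps)
    have "(1 - b) powr \<gamma> * a = 1 - b"
      using b by (simp add: a_def powr_add[symmetric])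
    then show ?thesis
      using quot[of "1 - b"] b by simp
  qed
  have "measure \<mu> {b..<1} / (4 * (1 - b)) = (1 - b) powr \<gamma> * (a / (2 * (1 - b)) ^ 2) * measure \<mu> {b..<1}"
    by (simp only: const) simp
  also have "\<dots> \<le> (1 - b) powr \<gamma> * norm (Imu \<mu> (test_fun \<gamma> b) (of_real b))"
    using lower by (simp only: mult.assoc)
  finally show ?thesis .
qed

end

section \<open>Carleson measures\<close>

locale carleson_measure = unit_interval_measure +
  fixes C :: real
  assumes C_pos: "0 < C"
    and tail_le: "\<And>s. s < 1 \<Longrightarrow> measure \<mu> {t \<in> space \<mu>. s \<le> t} \<le> C * (1 - s)"
begin

lemma nn_integral_near_le:
  assumes \<gamma>: "0 \<le> \<gamma>" "\<gamma> < 1" and r: "r < 1"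
  shows "(\<integral>\<^sup>+t. ennreal ((1 - t) powr (-\<gamma>) / (1 - r) * indicator {r..} t) \<partial>\<mu>)
    \<le> ennreal (C * 2 powr \<gamma> / (1 - 2 powr (\<gamma> - 1)) * (1 - r) powr (-\<gamma>))"
proof -
  define A where "A k = {t \<in> space \<mu>. 1 - (1 - r) * 2 powr (-real k) \<le> t}" for k :: nat
  define c where "c k = ((1 - r) * 2 powr (-(real k + 1))) powr (-\<gamma>) / (1 - r)" for k :: nat
  define q where "q = 2 powr (\<gamma> - 1)"
  define R where "R = (1 - r) powr (-\<gamma>)"
  have q: "0 < q" "q < 1"
    using \<gamma> powr_less_mono[of "\<gamma> - 1" 0 2] by (auto simp: q_def)
  have "(\<integral>\<^sup>+t. ennreal ((1 - t) powr (-\<gamma>) / (1 - r) * indicator {r..} t) \<partial>\<mu>)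
      \<le> (\<Sum>k. ennreal (c k) * emeasure \<mu> (A k))"
  proof (rule nn_integral_le_suminf_cover)
    show "A k \<in> sets \<mu>" for k
      unfolding A_def by (rule tail_in_sets)
    fix t assume t: "t \<in> space \<mu>"
      and "ennreal ((1 - t) powr (-\<gamma>) / (1 - r) * indicator {r..} t) \<noteq> 0"
    then have rt: "r \<le> t" "t < 1"
      by (auto simp: space_eq indicator_def split: if_splits)
    obtain k where "t \<in> A k" "(1 - t) powr (-\<gamma>) \<le> ((1 - r) * 2 powr (-(real k + 1))) powr (-\<gamma>)"
      using dyadic_shell_near[OF rt \<gamma>(1)] t unfolding A_def by blast
    moreover from this(2) have "(1 - t) powr (-\<gamma>) / (1 - r) * indicator {r..} t \<le> c k"
      using rt r by (simp add: c_def divide_right_mono)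
    ultimately show "\<exists>k. t \<in> A k \<and> ennreal ((1 - t) powr (-\<gamma>) / (1 - r) * indicator {r..} t) \<le> ennreal (c k)"
      by (blast intro: ennreal_leI)
  qed
  also have "\<dots> \<le> ennreal (C * 2 powr \<gamma> * R / (1 - q))"
  proof (rule suminf_ennreal_le_geometric)
    fix k
    have "measure \<mu> (A k) \<le> C * (1 - r) * 2 powr (-real k)"
      using tail_le[of "1 - (1 - r) * 2 powr (-real k)"] r by (simp add: A_def)
    then have "c k * measure \<mu> (A k) \<le> c k * (C * (1 - r) * 2 powr (-real k))"
      using r by (intro mult_left_mono) (simp_all add: c_def)
    also have "\<dots> = C * R * (2 powr (-(real k + 1))) powr (-\<gamma>) * 2 powr (-real k)"
      using r by (simp add: c_def R_def powr_mult)
    also have "\<dots> = C * 2 powr \<gamma> * R * q ^ k"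
      by (simp add: q_def powr_powr powr_add[symmetric] powr_realpow[symmetric] algebra_simps)
    finally show "ennreal (c k) * emeasure \<mu> (A k) \<le> ennreal (C * 2 powr \<gamma> * R * q ^ k)"
      using r by (simp add: emeasure_eq_measure c_def ennreal_mult'[symmetric] ennreal_leI)
  qed (use q C_pos r in \<open>auto simp: R_def\<close>)
  finally show ?thesis
    by (simp add: q_def R_def)
qed

lemma nn_integral_far_le:
  assumes \<gamma>: "0 < \<gamma>" and r: "r < 1"
  shows "(\<integral>\<^sup>+t. ennreal ((1 - t) powr (-\<gamma> - 1) * indicator {..<r} t) \<partial>\<mu>)
    \<le> ennreal (2 * C / (1 - 2 powr (-\<gamma>)) * (1 - r) powr (-\<gamma>))"
proof -
  define B where "B k = {t \<in> space \<mu>. 1 - (1 - r) * 2 powr (real k + 1) \<le> t}" for k :: nat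
  define d where "d k = ((1 - r) * 2 powr real k) powr (-\<gamma> - 1)" for k :: nat
  define q where "q = 2 powr (-\<gamma>)"
  define R where "R = (1 - r) powr (-\<gamma>)"
  have q: "0 < q" "q < 1"
    using \<gamma> powr_less_mono[of "-\<gamma>" 0 2] by (auto simp: q_def)
  have "(\<integral>\<^sup>+t. ennreal ((1 - t) powr (-\<gamma> - 1) * indicator {..<r} t) \<partial>\<mu>)
      \<le> (\<Sum>k. ennreal (d k) * emeasure \<mu> (B k))"
  proof (rule nn_integral_le_suminf_cover)
    show "B k \<in> sets \<mu>" for k
      unfolding B_def by (rule tail_in_sets)
    fix t assume t: "t \<in> space \<mu>"
      and "ennreal ((1 - t) powr (-\<gamma> - 1) * indicator {..<r} t) \<noteq> 0"
    then have rt: "t < r" "0 \<le> t"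
      by (auto simp: space_eq indicator_def split: if_splits)
    obtain k where "t \<in> B k" "(1 - t) powr (-\<gamma> - 1) \<le> d k"
      using dyadic_shell_far[OF rt(1) r \<gamma>] t unfolding B_def d_def by blast
    then show "\<exists>k. t \<in> B k \<and> ennreal ((1 - t) powr (-\<gamma> - 1) * indicator {..<r} t) \<le> ennreal (d k)"
      using rt by (auto intro: ennreal_leI)
  qed
  also have "\<dots> \<le> ennreal (2 * C * R / (1 - q))"
  proof (rule suminf_ennreal_le_geometric)
    fix k
    have "measure \<mu> (B k) \<le> C * (1 - r) * 2 powr (real k + 1)"
      using tail_le[of "1 - (1 - r) * 2 powr (real k + 1)"] r by (simp add: B_def)
    then have "d k * measure \<mu> (B k) \<le> d k * (C * (1 - r) * 2 powr (real k + 1))"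
      using r by (intro mult_left_mono) (simp_all add: d_def)
    also have "\<dots> = C * ((1 - r) powr (-\<gamma> - 1) * (1 - r))
        * ((2 powr real k) powr (-\<gamma> - 1) * 2 powr (real k + 1))"
      using r by (simp add: d_def powr_mult)
    also have "(1 - r) powr (-\<gamma> - 1) * (1 - r) = R"
      using r by (simp add: R_def powr_diff)
    also have "(2 powr real k) powr (-\<gamma> - 1) * 2 powr (real k + 1) = 2 * q ^ k"
    proof -
      have "(2 powr real k) powr (-\<gamma> - 1) * 2 powr (real k + 1) = 2 powr (real k * (-\<gamma> - 1) + (real k + 1))"
        by (simp add: powr_powr powr_add)
      also have "real k * (-\<gamma> - 1) + (real k + 1) = 1 + (-\<gamma> * real k)"
        by algebra
      also have "(2::real) powr (1 + (-\<gamma> * real k)) = 2 * 2 powr (-\<gamma> * real k)"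
        by (subst powr_add) simp
      also have "2 powr (-\<gamma> * real k) = q ^ k"
        by (simp add: q_def powr_realpow[symmetric] powr_powr mult.commute)
      finally show ?thesis .
    qed
    finally show "ennreal (d k) * emeasure \<mu> (B k) \<le> ennreal (2 * C * R * q ^ k)"
      using r by (simp add: emeasure_eq_measure d_def ennreal_mult'[symmetric] ennreal_leI mult.assoc)
  qed (use q C_pos r in \<open>auto simp: R_def\<close>)
  finally show ?thesis
    by (simp add: q_def R_def)
qed

definition kernel_const :: "real \<Rightarrow> real" where
  "kernel_const \<gamma> = C * 2 powr \<gamma> / (1 - 2 powr (\<gamma> - 1)) + 2 * C / (1 - 2 powr (-\<gamma>))"

lemma kernel_const_pos:
  assumes "0 < \<gamma>" "\<gamma> < 1"
  shows "0 < kernel_const \<gamma>"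
proof -
  have "2 powr (\<gamma> - 1) < (1::real)" "2 powr (-\<gamma>) < (1::real)"
    using assms powr_less_mono[of "\<gamma> - 1" 0 2] powr_less_mono[of "-\<gamma>" 0 2] by auto
  then show ?thesis
    using C_pos unfolding kernel_const_def by (intro add_pos_pos divide_pos_pos) auto
qed

lemma nn_integral_kernel_le:
  assumes \<gamma>: "0 < \<gamma>" "\<gamma> < 1" and r: "0 \<le> r" "r < 1"
  shows "(\<integral>\<^sup>+t. ennreal ((1 - t) powr (-\<gamma>) / (1 - t * r)) \<partial>\<mu>)
    \<le> ennreal (kernel_const \<gamma> * (1 - r) powr (-\<gamma>))"
proof -
  define near where "near t = (1 - t) powr (-\<gamma>) / (1 - r) * indicator {r..} t" for t
  define far where "far t = (1 - t) powr (-\<gamma> - 1) * indicator {..<r} t" for t :: real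
  have q: "2 powr (\<gamma> - 1) < (1::real)" "2 powr (-\<gamma>) < (1::real)"
    using \<gamma> powr_less_mono[of "\<gamma> - 1" 0 2] powr_less_mono[of "-\<gamma>" 0 2] by auto
  have "(\<integral>\<^sup>+t. ennreal ((1 - t) powr (-\<gamma>) / (1 - t * r)) \<partial>\<mu>) \<le> (\<integral>\<^sup>+t. ennreal (near t) + ennreal (far t) \<partial>\<mu>)"
  proof (rule nn_integral_mono)
    fix t assume "t \<in> space \<mu>"
    then have "ennreal ((1 - t) powr (-\<gamma>) / (1 - t * r)) \<le> ennreal (near t + far t)"
      using r unfolding near_def far_def by (intro ennreal_leI kernel_le_near_far) (auto simp: space_eq)
    moreover have "0 \<le> near t" "0 \<le> far t"
      using r by (simp_all add: near_def far_def)
    ultimately show "ennreal ((1 - t) powr (-\<gamma>) / (1 - t * r)) \<le> ennreal (near t) + ennreal (far t)"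
      by simp
  qed
  also have "\<dots> = (\<integral>\<^sup>+t. ennreal (near t) \<partial>\<mu>) + (\<integral>\<^sup>+t. ennreal (far t) \<partial>\<mu>)"
    by (intro nn_integral_add borel_measurable_restrict) (unfold near_def far_def, measurable)
  also have "\<dots> \<le> ennreal (C * 2 powr \<gamma> / (1 - 2 powr (\<gamma> - 1)) * (1 - r) powr (-\<gamma>))
      + ennreal (2 * C / (1 - 2 powr (-\<gamma>)) * (1 - r) powr (-\<gamma>))"
    unfolding near_def far_def
    using \<gamma> r by (intro add_mono nn_integral_near_le nn_integral_far_le) auto
  also have "\<dots> = ennreal (kernel_const \<gamma> * (1 - r) powr (-\<gamma>))"
    using C_pos q by (simp add: kernel_const_def distrib_right ennreal_plus)
  finally show ?thesis .
qed

lemma kernel_integrable: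
  assumes \<gamma>: "0 < \<gamma>" "\<gamma> < 1" and r: "0 \<le> r" "r < 1"
  shows "integrable \<mu> (\<lambda>t. (1 - t) powr (-\<gamma>) / (1 - t * r))"
    and "(\<integral>t. (1 - t) powr (-\<gamma>) / (1 - t * r) \<partial>\<mu>) \<le> kernel_const \<gamma> * (1 - r) powr (-\<gamma>)"
proof -
  have meas: "(\<lambda>t. (1 - t) powr (-\<gamma>) / (1 - t * r)) \<in> borel_measurable \<mu>"
    by (intro borel_measurable_restrict) simp
  have nonneg: "0 \<le> (1 - t) powr (-\<gamma>) / (1 - t * r)" if "t \<in> space \<mu>" for t
    using that r one_minus_mult_pos[of t r] by (auto simp: space_eq)
  show "integrable \<mu> (\<lambda>t. (1 - t) powr (-\<gamma>) / (1 - t * r))"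
    and "(\<integral>t. (1 - t) powr (-\<gamma>) / (1 - t * r) \<partial>\<mu>) \<le> kernel_const \<gamma> * (1 - r) powr (-\<gamma>)"
    using integrable_integral_le_of_nn_integral_le[OF meas nonneg nn_integral_kernel_le[OF assms]]
      kernel_const_pos[OF \<gamma>] by auto
qed

lemma Imu_integrable_norm_le:
  assumes \<gamma>: "0 < \<gamma>" "\<gamma> < 1" and f: "f \<in> Hv \<gamma>" and z: "z \<in> ball 0 1"
  shows "integrable \<mu> (\<lambda>t. f (of_real t) / (1 - of_real t * z))"
    and "norm (Imu \<mu> f z) \<le> kernel_const \<gamma> * normv \<gamma> f * (1 - norm z) powr (-\<gamma>)"
proof -
  define \<psi> where "\<psi> t = (1 - t) powr (-\<gamma>) / (1 - t * norm z)" for t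
  have z1: "norm z < 1"
    using z by simp
  have \<psi>: "integrable \<mu> \<psi>" "integral\<^sup>L \<mu> \<psi> \<le> kernel_const \<gamma> * (1 - norm z) powr (-\<gamma>)"
    using kernel_integrable[OF \<gamma>, of "norm z"] z1 unfolding \<psi>_def by auto
  have pointwise: "norm (f (of_real t) / (1 - of_real t * z)) \<le> normv \<gamma> f * \<psi> t"
    if "t \<in> space \<mu>" for t
  proof -
    have t: "0 \<le> t" "t < 1"
      using that by (auto simp: space_eq)
    have "norm (f (of_real t)) \<le> normv \<gamma> f * (1 - t) powr (-\<gamma>)"
      using Hv_norm_le[OF f, of "of_real t"] t by simp
    moreover have "1 - t * norm z \<le> norm (1 - of_real t * z)" "0 < 1 - t * norm z"
      using norm_one_minus_mult_ge[of t z] one_minus_mult_pos[of t "norm z"] t z1 by auto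
    ultimately show ?thesis
      using normv_nonneg[OF f] by (simp add: norm_divide \<psi>_def frac_le)
  qed
  show int: "integrable \<mu> (\<lambda>t. f (of_real t) / (1 - of_real t * z))"
  proof (rule Bochner_Integration.integrable_bound)
    show "integrable \<mu> (\<lambda>t. normv \<gamma> f * \<psi> t)"
      using \<psi> by simp
    show "(\<lambda>t. f (of_real t) / (1 - of_real t * z)) \<in> borel_measurable \<mu>"
      using Hv_holomorphic[OF f] z1 by (rule measurable_cauchy_integrand)
    show "AE t in \<mu>. norm (f (of_real t) / (1 - of_real t * z)) \<le> norm (normv \<gamma> f * \<psi> t)"
      using pointwise by (intro AE_I2) (auto intro: order_trans[OF _ abs_ge_self])
  qed
  have "norm (Imu \<mu> f z) \<le> (\<integral>t. norm (f (of_real t) / (1 - of_real t * z)) \<partial>\<mu>)"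
    unfolding Imu_def by (rule integral_norm_bound)
  also have "\<dots> \<le> (\<integral>t. normv \<gamma> f * \<psi> t \<partial>\<mu>)"
    using int \<psi> pointwise by (intro integral_mono) auto
  also have "\<dots> \<le> normv \<gamma> f * (kernel_const \<gamma> * (1 - norm z) powr (-\<gamma>))"
    using \<psi> normv_nonneg[OF f] by (simp add: mult_left_mono)
  finally show "norm (Imu \<mu> f z) \<le> kernel_const \<gamma> * normv \<gamma> f * (1 - norm z) powr (-\<gamma>)"
    by (simp add: algebra_simps)
qed

lemma Imu_holomorphic:
  assumes "0 < \<gamma>" "\<gamma> < 1" "f \<in> Hv \<gamma>"
  shows "Imu \<mu> f holomorphic_on ball 0 1"
proof -
  have "integrable \<mu> (\<lambda>t. f (of_real t))"
    using Imu_integrable_norm_le(1)[OF assms, of 0] by simp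
  then show ?thesis
    unfolding Imu_def[abs_def] by (rule holomorphic_on_cauchy_transform)
qed

lemma Imu_Hv:
  assumes \<gamma>: "0 < \<gamma>" "\<gamma> < 1" and f: "f \<in> Hv \<gamma>"
  shows "Imu \<mu> f \<in> Hv \<gamma>" and "normv \<gamma> (Imu \<mu> f) \<le> kernel_const \<gamma> * normv \<gamma> f"
proof -
  have bound: "(1 - norm z) powr \<gamma> * norm (Imu \<mu> f z) \<le> kernel_const \<gamma> * normv \<gamma> f"
    if z: "z \<in> ball 0 1" for z
  proof -
    have "(1 - norm z) powr \<gamma> * norm (Imu \<mu> f z)
        \<le> (1 - norm z) powr \<gamma> * (kernel_const \<gamma> * normv \<gamma> f * (1 - norm z) powr (-\<gamma>))"
      using Imu_integrable_norm_le(2)[OF \<gamma> f z] by (intro mult_left_mono) auto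
    also have "\<dots> = kernel_const \<gamma> * normv \<gamma> f"
      using z by (simp add: powr_minus field_simps)
    finally show ?thesis .
  qed
  show "Imu \<mu> f \<in> Hv \<gamma>" and "normv \<gamma> (Imu \<mu> f) \<le> kernel_const \<gamma> * normv \<gamma> f"
    using HvI[OF Imu_holomorphic[OF \<gamma> f] bound] by auto
qed

lemma Imu_well_definedI:
  assumes "0 < \<gamma>" "\<gamma> < 1"
  shows "Imu_well_defined \<mu> \<gamma>"
  unfolding Imu_well_defined_def
  using Imu_integrable_norm_le(1)[OF assms] Imu_holomorphic[OF assms] Imu_Hv(1)[OF assms] by blast

lemma Imu_diff:
  assumes "0 < \<gamma>" "\<gamma> < 1" "f \<in> Hv \<gamma>" "g \<in> Hv \<gamma>" "z \<in> ball 0 1"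
  shows "Imu \<mu> f z - Imu \<mu> g z = Imu \<mu> (\<lambda>w. f w - g w) z"
  unfolding Imu_def
  using Imu_integrable_norm_le(1)[OF assms(1,2,3,5)] Imu_integrable_norm_le(1)[OF assms(1,2,4,5)]
  by (simp add: diff_divide_distrib)

lemma Imu_continuousI:
  assumes \<gamma>: "0 < \<gamma>" "\<gamma> < 1"
  shows "Imu_continuous \<mu> \<gamma>"
  unfolding Imu_continuous_def
proof (intro conjI Imu_well_definedI[OF \<gamma>] ballI allI impI)
  fix f \<epsilon> assume f: "f \<in> Hv \<gamma>" and \<epsilon>: "(\<epsilon>::real) > 0"
  define K where "K = kernel_const \<gamma>"
  have K: "0 < K"
    unfolding K_def by (rule kernel_const_pos[OF \<gamma>])
  show "\<exists>\<delta>>0. \<forall>g\<in>Hv \<gamma>. normv \<gamma> (\<lambda>z. g z - f z) < \<delta> \<longrightarrow> normv \<gamma> (\<lambda>z. Imu \<mu> g z - Imu \<mu> f z) < \<epsilon>"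
  proof (intro exI[of _ "\<epsilon> / K"] conjI ballI impI)
    fix g assume g: "g \<in> Hv \<gamma>" and close: "normv \<gamma> (\<lambda>z. g z - f z) < \<epsilon> / K"
    have "normv \<gamma> (\<lambda>z. Imu \<mu> g z - Imu \<mu> f z) = normv \<gamma> (Imu \<mu> (\<lambda>z. g z - f z))"
      unfolding normv_def using Imu_diff[OF \<gamma> g f] by simp
    also have "\<dots> \<le> K * normv \<gamma> (\<lambda>z. g z - f z)"
      unfolding K_def by (rule Imu_Hv(2)[OF \<gamma> Hv_diff[OF g f]])
    also have "\<dots> < \<epsilon>"
      using close K by (simp add: field_simps)
    finally show "normv \<gamma> (\<lambda>z. Imu \<mu> g z - Imu \<mu> f z) < \<epsilon>" .
  qed (use \<epsilon> K in simp)
qed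

lemma Imu_test_fun_norm_le:
  assumes \<gamma>: "0 < \<gamma>" "\<gamma> < \<beta>" "\<beta> < 1" and b: "0 \<le> b" "b < 1" and z: "z \<in> ball 0 1"
  shows "norm (Imu \<mu> (test_fun \<gamma> b) z)
    \<le> (1 - b) powr (\<beta> - \<gamma>) * (\<integral>t. (1 - t) powr (-\<beta>) \<partial>\<mu>) / (1 - norm z)"
proof -
  have weight: "integrable \<mu> (\<lambda>t. (1 - t) powr (-\<beta>))"
    using kernel_integrable(1)[of \<beta> 0] \<gamma> by simp
  have "test_fun \<gamma> b \<in> Hv \<gamma>"
    using \<gamma> b by (intro test_fun_Hv(1)) auto
  then have integrand: "integrable \<mu> (\<lambda>t. test_fun \<gamma> b (of_real t) / (1 - of_real t * z))"
    using \<gamma> by (intro Imu_integrable_norm_le(1)[OF _ _ _ z]) auto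
  have "norm (Imu \<mu> (test_fun \<gamma> b) z)
      \<le> (\<integral>t. (1 - b) powr (\<beta> - \<gamma>) / (1 - norm z) * (1 - t) powr (-\<beta>) \<partial>\<mu>)"
    unfolding Imu_def using weight integrand \<gamma> b z
    by (intro order_trans[OF integral_norm_bound] integral_mono test_fun_quotient_le)
      (auto simp: space_eq)
  then show ?thesis
    by simp
qed

lemma Imu_test_fun_tendsto_zero:
  assumes \<gamma>: "0 < \<gamma>" "\<gamma> < 1" and z: "z \<in> ball 0 1"
  shows "((\<lambda>b. Imu \<mu> (test_fun \<gamma> b) z) \<longlongrightarrow> 0) (at_left 1)"
proof -
  define \<beta> where "\<beta> = (1 + \<gamma>) / 2"
  have \<beta>: "\<gamma> < \<beta>" "\<beta> < 1"
    using \<gamma> by (auto simp: \<beta>_def)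
  define K where "K = (\<integral>t. (1 - t) powr (-\<beta>) \<partial>\<mu>)"
  have "((\<lambda>b. (1 - b) powr (\<beta> - \<gamma>)) \<longlongrightarrow> 0) (at_left 1)"
  proof (rule tendsto_zero_powrI[OF _ tendsto_const])
    show "((\<lambda>b. 1 - b) \<longlongrightarrow> 0) (at_left (1::real))"
      by (intro tendsto_eq_intros) auto
    show "\<forall>\<^sub>F b in at_left (1::real). 0 \<le> 1 - b"
      unfolding eventually_at_left_field by (intro exI[of _ 0]) auto
  qed (use \<beta> in auto)
  then have majorant: "((\<lambda>b. (1 - b) powr (\<beta> - \<gamma>) * K / (1 - norm z)) \<longlongrightarrow> 0) (at_left 1)"
    by (intro tendsto_divide_zero tendsto_mult_left_zero)
  have "\<forall>\<^sub>F b in at_left 1. norm (Imu \<mu> (test_fun \<gamma> b) z) \<le> (1 - b) powr (\<beta> - \<gamma>) * K / (1 - norm z)"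
    unfolding eventually_at_left_field K_def using \<gamma> \<beta> z
    by (intro exI[of _ 0]) (auto intro: Imu_test_fun_norm_le)
  then show ?thesis
    using majorant by (rule Lim_null_comparison)
qed

lemma not_Imu_compact:
  assumes \<gamma>: "0 < \<gamma>" "\<gamma> < 1" and "\<not> vanishing_carleson \<mu>"
  shows "\<not> Imu_compact \<mu> \<gamma>"
proof
  assume compact: "Imu_compact \<mu> \<gamma>"
  obtain c b where c: "0 < c" and b: "\<And>n. 0 \<le> b n" "\<And>n. b n < 1"
    "\<And>n. c * (1 - b n) < measure \<mu> {b n..<1}" and b_lim: "b \<longlonglongrightarrow> 1"
    using not_vanishing_carleson_imp_seq[OF assms(3)] by blast
  define F where "F n = test_fun \<gamma> (b n)" for n
  have F: "F n \<in> Hv \<gamma>" "normv \<gamma> (F n) \<le> 1" for n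
    unfolding F_def using test_fun_Hv[of \<gamma> "b n"] \<gamma> b(1,2)[of n] by auto
  then obtain r g where r: "strict_mono r" and g: "g \<in> Hv \<gamma>"
    and lim: "(\<lambda>n. normv \<gamma> (\<lambda>z. Imu \<mu> (F (r n)) z - g z)) \<longlonglongrightarrow> 0"
    using compact unfolding Imu_compact_def by blast
  have IF: "Imu \<mu> (F n) \<in> Hv \<gamma>" for n
    using Imu_Hv(1)[OF \<gamma> F(1)] .
  have g_zero: "g z = 0" if z: "z \<in> ball 0 1" for z
  proof (rule LIMSEQ_unique)
    show "(\<lambda>n. Imu \<mu> (F (r n)) z) \<longlonglongrightarrow> g z"
      using IF g lim z by (rule normv_tendsto_imp_pointwise)
    have "filterlim b (at_left 1) sequentially"
      using b(2) b_lim by (intro tendsto_imp_filterlim_at_left) (auto intro: always_eventually)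
    then have "(\<lambda>n. Imu \<mu> (F n) z) \<longlonglongrightarrow> 0"
      unfolding F_def using Imu_test_fun_tendsto_zero[OF \<gamma> z] by (rule filterlim_compose[rotated])
    then show "(\<lambda>n. Imu \<mu> (F (r n)) z) \<longlonglongrightarrow> 0"
      using LIMSEQ_subseq_LIMSEQ[OF _ r] by (auto simp: comp_def)
  qed
  have "c / 4 \<le> normv \<gamma> (\<lambda>z. Imu \<mu> (F (r n)) z - g z)" for n
  proof -
    let ?b = "b (r n)"
    have "c / 4 \<le> measure \<mu> {?b..<1} / (4 * (1 - ?b))"
      using b(2,3)[of "r n"] by (simp add: field_simps)
    also have "\<dots> \<le> (1 - ?b) powr \<gamma> * norm (Imu \<mu> (F (r n)) (of_real ?b))"
      unfolding F_def by (rule Imu_test_fun_lower_bound[OF b(1,2)])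
    also have "\<dots> \<le> normv \<gamma> (\<lambda>z. Imu \<mu> (F (r n)) z - g z)"
      using Hv_weighted_le_normv[OF Hv_diff[OF IF g], of "of_real ?b"] b(1,2)[of "r n"]
      by (simp add: g_zero)
    finally show ?thesis .
  qed
  moreover have "eventually (\<lambda>n. normv \<gamma> (\<lambda>z. Imu \<mu> (F (r n)) z - g z) < c / 4) sequentially"
    using lim c by (intro order_tendstoD(2)) auto
  ultimately show False
    by (auto simp: eventually_sequentially not_less[symmetric])
qed

end

theorem corollary19:
  fixes \<mu> :: "real measure" and \<gamma> :: real
  assumes "sets \<mu> = sets (restrict_space borel {0..<1})"
    and "finite_measure \<mu>"
    and "carleson \<mu>" and "\<not> vanishing_carleson \<mu>"
    and "\<gamma> > 0"
  shows "(Imu_continuous \<mu> \<gamma> \<longleftrightarrow> \<gamma> < 1) \<and> (\<gamma> < 1 \<longrightarrow> \<not> Imu_compact \<mu> \<gamma>)"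
proof -
  interpret unit_interval_measure \<mu>
    using assms(1,2) by (simp add: unit_interval_measure_def unit_interval_measure_axioms_def)
  obtain C where "0 < C" "\<And>s. s < 1 \<Longrightarrow> measure \<mu> {t \<in> space \<mu>. s \<le> t} \<le> C * (1 - s)"
    using carleson_imp_tail_bound[OF assms(3)] by blast
  then interpret carleson_measure \<mu> C
    by unfold_locales
  have "Imu_continuous \<mu> \<gamma> \<longleftrightarrow> \<gamma> < 1"
  proof
    assume "Imu_continuous \<mu> \<gamma>"
    then have "Imu_well_defined \<mu> \<gamma>"
      by (simp add: Imu_continuous_def)
    then show "\<gamma> < 1"
      using Imu_not_well_defined[OF assms(4)] by (meson not_le)
  qed (use Imu_continuousI assms(5) in blast)
  moreover have "\<gamma> < 1 \<longrightarrow> \<not> Imu_compact \<mu> \<gamma>"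
    using not_Imu_compact[OF assms(5) _ assms(4)] by blast
  ultimately show ?thesis ..
qed

end
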